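(* Let $(X,d,\mu)$ be a coarse median space in which rank at most $1$ is achieved under parameters $\rho,H$. Then for any $\zeta\geqslant0$, setting $\zeta'=2H(4)+\zeta$, for all $a,b,c\in X$, $$\mathcal N_\zeta([a,b])\subseteq\mathcal N_{\zeta'}([a,c])\cup\mathcal N_{\zeta'}([c,b]).$$
   Context: Write $x\sim_s y$ if $d(x,y)\leqslant s$. A coarse median space is a triple $(X,d,\mu)$ with $(X,d)$ a metric space and $\mu\colon X^3\to X$ satisfying: (M1) $\mu(a,a,b)=a$; (M2) $\mu(a_1,a_2,a_3)$ is invariant under permutations of its arguments; (C1) there is an affine $\rho(t)=Kt+H_0$ with $d(\mu(a,b,c),\mu(a',b',c'))\leqslant\rho(d(a,a')+d(b,b')+d(c,c'))$ for all points; (C2) there is $H\colon\mathbb N\to[0,\infty)$ such that for every finite $A\subseteq X$ with $1\leqslant|A|\leqslant p$ there are a finite median algebra $(\Pi,\mu_\Pi)$ and maps $\pi\colon A\to\Pi$, $\lambda\colon\Pi\to X$ with $\lambda\mu_\Pi(x,y,z)\sim_{H(p)}\mu(\lambda x,\lambda y,\lambda z)$ for all $x,y,z\in\Pi$ and $\lambda\pi a\sim_{H(p)}a$ for all $a\in A$. (A median algebra is a set with a ternary operation $m$ satisfying $m(a,a,b)=a$, full symmetry, and $m(m(a,b,c),b,d)=m(a,b,m(c,b,d))$; its rank is the supremum of $k$ such that it contains a subalgebra isomorphic to $(\mathbb Z_2)^k$ with coordinatewise majority vote.) "Rank at most $n$ is achieved under parameters $\rho,H$" means $\rho,H$ satisfy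 (C1),(C2) and for every finite $A$ as in (C2) one can choose $(\Pi,\pi,\lambda)$ as in (C2) with $\Pi$ of rank at most $n$ and $\lambda\circ\pi$ equal to the inclusion $A\hookrightarrow X$. The interval is $[a,b]=\{\mu(a,y,b):y\in X\}$, and $\mathcal N_\zeta(S)=\{y\in X:\exists s\in S,\ d(y,s)\leqslant\zeta\}$. *)

theory Defs
  imports "HOL-Analysis.Analysis"
begin

text \<open>Median algebras on a carrier set P (of natural numbers; every finite
median algebra is isomorphic to one carried by a finite set of naturals).\<close>

definition median_algebra :: "'b set \<Rightarrow> ('b \<Rightarrow> 'b \<Rightarrow> 'b \<Rightarrow> 'b) \<Rightarrow> bool" where
  "median_algebra P m \<longleftrightarrow>
     (\<forall>x\<in>P. \<forall>y\<in>P. \<forall>z\<in>P. m x y z \<in> P) \<and>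
     (\<forall>a\<in>P. \<forall>b\<in>P. m a a b = a) \<and>
     (\<forall>a\<in>P. \<forall>b\<in>P. \<forall>c\<in>P. m a b c = m b a c \<and> m a b c = m a c b) \<and>
     (\<forall>a\<in>P. \<forall>b\<in>P. \<forall>c\<in>P. \<forall>d\<in>P. m (m a b c) b d = m a b (m c b d))"

text \<open>The cube (Z_2)^k as boolean lists of length k, with coordinatewise majority vote.\<close>

definition cube :: "nat \<Rightarrow> bool list set" where
  "cube k = {xs. length xs = k}"

definition maj3 :: "bool list \<Rightarrow> bool list \<Rightarrow> bool list \<Rightarrow> bool list" where
  "maj3 xs ys zs = map (\<lambda>(a, b, c). (a \<and> b) \<or> (b \<and> c) \<or> (a \<and> c)) (zip xs (zip ys zs))"

definition contains_cube :: "'b set \<Rightarrow> ('b \<Rightarrow> 'b \<Rightarrow> 'b \<Rightarrow> 'b) \<Rightarrow> nat \<Rightarrow> bool" where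
  "contains_cube P m k \<longleftrightarrow>
     (\<exists>f. inj_on f (cube k) \<and> f ` cube k \<subseteq> P \<and>
          (\<forall>x\<in>cube k. \<forall>y\<in>cube k. \<forall>z\<in>cube k. f (maj3 x y z) = m (f x) (f y) (f z)))"

definition rank_at_most :: "'b set \<Rightarrow> ('b \<Rightarrow> 'b \<Rightarrow> 'b \<Rightarrow> 'b) \<Rightarrow> nat \<Rightarrow> bool" where
  "rank_at_most P m n \<longleftrightarrow> (\<forall>k. contains_cube P m k \<longrightarrow> k \<le> n)"

definition median_axioms_M :: "('a \<Rightarrow> 'a \<Rightarrow> 'a \<Rightarrow> 'a) \<Rightarrow> bool" where
  "median_axioms_M \<mu> \<longleftrightarrow>
     (\<forall>a b. \<mu> a a b = a) \<and>
     (\<forall>a b c. \<mu> a b c = \<mu> b a c \<and> \<mu> a b c = \<mu> a c b)"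

text \<open>(C1) with affine control function rho(t) = K t + H0.\<close>

definition C1 :: "('a::metric_space \<Rightarrow> 'a \<Rightarrow> 'a \<Rightarrow> 'a) \<Rightarrow> real \<Rightarrow> real \<Rightarrow> bool" where
  "C1 \<mu> K H0 \<longleftrightarrow>
     (\<forall>a b c a' b' c'. dist (\<mu> a b c) (\<mu> a' b' c')
        \<le> K * (dist a a' + dist b b' + dist c c') + H0)"

definition C2 :: "('a::metric_space \<Rightarrow> 'a \<Rightarrow> 'a \<Rightarrow> 'a) \<Rightarrow> (nat \<Rightarrow> real) \<Rightarrow> bool" where
  "C2 \<mu> H \<longleftrightarrow> (\<forall>p. H p \<ge> 0) \<and>
     (\<forall>p A. finite A \<and> 1 \<le> card A \<and> card A \<le> p \<longrightarrow>
        (\<exists>(P::nat set) m \<pi> lam. finite P \<and> median_algebra P m \<and> \<pi> ` A \<subseteq> P \<and>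
           (\<forall>x\<in>P. \<forall>y\<in>P. \<forall>z\<in>P. dist (lam (m x y z)) (\<mu> (lam x) (lam y) (lam z)) \<le> H p) \<and>
           (\<forall>a\<in>A. dist (lam (\<pi> a)) a \<le> H p)))"

definition coarse_median :: "('a::metric_space \<Rightarrow> 'a \<Rightarrow> 'a \<Rightarrow> 'a) \<Rightarrow> bool" where
  "coarse_median \<mu> \<longleftrightarrow> median_axioms_M \<mu> \<and> (\<exists>K H0 H. C1 \<mu> K H0 \<and> C2 \<mu> H)"

definition rank_achieved ::
  "('a::metric_space \<Rightarrow> 'a \<Rightarrow> 'a \<Rightarrow> 'a) \<Rightarrow> real \<Rightarrow> real \<Rightarrow> (nat \<Rightarrow> real) \<Rightarrow> nat \<Rightarrow> bool" where
  "rank_achieved \<mu> K H0 H n \<longleftrightarrow> C1 \<mu> K H0 \<and> C2 \<mu> H \<and>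
     (\<forall>p A. finite A \<and> 1 \<le> card A \<and> card A \<le> p \<longrightarrow>
        (\<exists>(P::nat set) m \<pi> lam. finite P \<and> median_algebra P m \<and> rank_at_most P m n \<and>
           \<pi> ` A \<subseteq> P \<and>
           (\<forall>x\<in>P. \<forall>y\<in>P. \<forall>z\<in>P. dist (lam (m x y z)) (\<mu> (lam x) (lam y) (lam z)) \<le> H p) \<and>
           (\<forall>a\<in>A. lam (\<pi> a) = a)))"

definition cm_interval :: "('a \<Rightarrow> 'a \<Rightarrow> 'a \<Rightarrow> 'a) \<Rightarrow> 'a \<Rightarrow> 'a \<Rightarrow> 'a set" where
  "cm_interval \<mu> a b = {\<mu> a y b | y. True}"

definition nbhd :: "real \<Rightarrow> 'a::metric_space set \<Rightarrow> 'a set" where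
  "nbhd \<zeta> S = {y. \<exists>s\<in>S. dist y s \<le> \<zeta>}"

end

theory Submission
  imports Defs
begin

text \<open>In a median algebra of rank at most 1, a point w of an interval [a, b] lies in [a, c] or
in [c, b] for every c: otherwise the four points m a w c, w, m c w b and their median with c
form a square, i.e. a copy of (Z_2)^2. Approximating a, b, c and a point z with w = m a z b by a
rank 1 finite median algebra, the image of w is H(4)-close to the median of a, z, b, and is
H(4)-close to a point of [a, c] or of [c, b]; two triangle inequalities finish the proof.\<close>

lemma median_algebraD:
  assumes "median_algebra P m"
  shows median_algebra_closed: "x \<in> P \<Longrightarrow> y \<in> P \<Longrightarrow> z \<in> P \<Longrightarrow> m x y z \<in> P"
    and "a \<in> P \<Longrightarrow> b \<in> P \<Longrightarrow> m a a b = a"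
    and "a \<in> P \<Longrightarrow> b \<in> P \<Longrightarrow> c \<in> P \<Longrightarrow> m a b c = m b a c"
    and "a \<in> P \<Longrightarrow> b \<in> P \<Longrightarrow> c \<in> P \<Longrightarrow> m a b c = m a c b"
    and "a \<in> P \<Longrightarrow> b \<in> P \<Longrightarrow> c \<in> P \<Longrightarrow> d \<in> P \<Longrightarrow> m (m a b c) b d = m a b (m c b d)"
  using assms unfolding median_algebra_def by blast+

lemma median_algebra_majority_all:
  assumes "median_algebra P m" "x \<in> P" "y \<in> P"
  shows "m x x y = x" "m x y x = x" "m y x x = x"
  using median_algebraD[OF assms(1)] assms(2,3) by metis+

lemma median_algebra_permutations:
  assumes "median_algebra P m" "a \<in> P" "b \<in> P" "c \<in> P" "m a b c = x"
  shows "m a c b = x" "m b a c = x" "m b c a = x" "m c a b = x" "m c b a = x"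
  using median_algebraD[OF assms(1)] assms(2-5) by metis+

lemma median_algebra_median_in_interval:
  assumes "median_algebra P m" "a \<in> P" "b \<in> P" "z \<in> P"
  shows "m a (m a z b) b = m a z b"
  using median_algebraD[OF assms(1)] assms(2-4) by (smt (verit, best))

text \<open>The points w, v, m u c v, u are the corners of a square, in cyclic order: each corner
lies between its two neighbours.\<close>

lemma median_algebra_square:
  assumes "median_algebra P m" "a \<in> P" "b \<in> P" "c \<in> P" "w \<in> P" "m a w b = w"
  defines "u \<equiv> m a w c" and "v \<equiv> m c w b"
  shows "m u w v = w" and "m w v (m u c v) = v" and "m v (m u c v) u = m u c v"
    and "m (m u c v) u w = u"
  unfolding u_def v_def using median_algebraD[OF assms(1)] assms(2-6) by (smt (verit, best))+

lemma cube_2_cases: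
  assumes "xs \<in> cube 2"
  obtains "xs = [False, False]" | "xs = [True, False]" | "xs = [True, True]" | "xs = [False, True]"
proof -
  obtain x y where "xs = [x, y]"
    using assms unfolding cube_def by (auto simp: numeral_2_eq_2 length_Suc_conv)
  then show ?thesis using that by (cases x; cases y) auto
qed

lemma contains_cube_2_if_square:
  assumes ma: "median_algebra P m" and P: "u \<in> P" "w \<in> P" "v \<in> P" "t \<in> P"
    and sq: "m u w v = w" "m w v t = v" "m v t u = t" "m t u w = u"
    and "u \<noteq> w" "v \<noteq> w"
  shows "contains_cube P m 2"
proof -
  note R = median_algebra_permutations[OF ma _ _ _ sq(1)] median_algebra_permutations[OF ma _ _ _ sq(2)]
    median_algebra_permutations[OF ma _ _ _ sq(3)] median_algebra_permutations[OF ma _ _ _ sq(4)]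
  note maj = median_algebra_majority_all[OF ma]
  have distinct: "u \<noteq> w" "v \<noteq> w" "u \<noteq> v" "t \<noteq> w" "t \<noteq> u" "t \<noteq> v"
  proof -
    have "u = v \<Longrightarrow> u = w" "t = w \<Longrightarrow> v = w" "t = u \<Longrightarrow> v = w" "t = v \<Longrightarrow> u = w"
      using sq R P maj by metis+
    then show "u \<noteq> w" "v \<noteq> w" "u \<noteq> v" "t \<noteq> w" "t \<noteq> u" "t \<noteq> v"
      using assms(10,11) by blast+
  qed
  define f where "f xs = (if xs = [False, False] then u else if xs = [True, False] then w
      else if xs = [True, True] then v else t)" for xs
  have f: "f [False, False] = u" "f [True, False] = w" "f [True, True] = v" "f [False, True] = t"
    by (simp_all add: f_def)
  have "inj_on f (cube 2)"
  proof (rule inj_onI)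
    fix x y assume "x \<in> cube 2" "y \<in> cube 2" "f x = f y"
    then show "x = y" using distinct distinct[symmetric]
      by (elim cube_2_cases) (simp_all add: f)
  qed
  moreover have "f ` cube 2 \<subseteq> P"
    using P by (auto elim: cube_2_cases simp: f)
  moreover have "f (maj3 x y z) = m (f x) (f y) (f z)"
    if "x \<in> cube 2" "y \<in> cube 2" "z \<in> cube 2" for x y z
    using that by (elim cube_2_cases) (simp_all add: maj3_def f R P maj sq)
  ultimately show ?thesis unfolding contains_cube_def by blast
qed

lemma rank_one_interval_split:
  assumes ma: "median_algebra P m" and rk: "rank_at_most P m 1"
    and P: "a \<in> P" "b \<in> P" "c \<in> P" "w \<in> P" and w: "m a w b = w"
  shows "m a w c = w \<or> m c w b = w"
proof (rule ccontr)
  assume "\<not> ?thesis"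
  then have "contains_cube P m 2"
    using median_algebra_closed[OF ma] P
    by (intro contains_cube_2_if_square[OF ma _ P(4) _ _ median_algebra_square[OF ma P w]]) auto
  with rk show False unfolding rank_at_most_def by fastforce
qed

lemma rank_achievedE:
  assumes "rank_achieved \<mu> K H0 H n" "finite A" "A \<noteq> {}" "card A \<le> p"
  obtains P :: "nat set" and m \<pi> lam where "median_algebra P m" "rank_at_most P m n"
    "\<And>a. a \<in> A \<Longrightarrow> \<pi> a \<in> P"
    "\<And>x y z. x \<in> P \<Longrightarrow> y \<in> P \<Longrightarrow> z \<in> P \<Longrightarrow> dist (lam (m x y z)) (\<mu> (lam x) (lam y) (lam z)) \<le> H p"
    "\<And>a. a \<in> A \<Longrightarrow> lam (\<pi> a) = a"
proof -
  have "finite A \<and> 1 \<le> card A \<and> card A \<le> p"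
    using assms(2-4) by (simp add: Suc_le_eq card_gt_0_iff)
  with assms(1) obtain P :: "nat set" and m \<pi> lam where "median_algebra P m" "rank_at_most P m n"
    "\<pi> ` A \<subseteq> P" "\<forall>x\<in>P. \<forall>y\<in>P. \<forall>z\<in>P. dist (lam (m x y z)) (\<mu> (lam x) (lam y) (lam z)) \<le> H p"
    "\<forall>a\<in>A. lam (\<pi> a) = a"
    unfolding rank_achieved_def by (elim conjE allE impE exE) auto
  then show ?thesis by (intro that) auto
qed

lemma dist_two_step_le:
  fixes y p q r :: "'a::metric_space"
  assumes "dist y p \<le> \<zeta>" "dist q p \<le> h" "dist q r \<le> h"
  shows "dist y r \<le> 2 * h + \<zeta>"
  using assms dist_triangle[of y r p] dist_triangle[of p r q] by (simp add: dist_commute)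

theorem lemma4p5:
  fixes \<mu> :: "'a::metric_space \<Rightarrow> 'a \<Rightarrow> 'a \<Rightarrow> 'a"
    and K H0 :: real and H :: "nat \<Rightarrow> real" and \<zeta> :: real
  assumes "coarse_median \<mu>"
    and "rank_achieved \<mu> K H0 H 1"
    and "\<zeta> \<ge> 0"
  shows "\<forall>a b c. nbhd \<zeta> (cm_interval \<mu> a b) \<subseteq>
           nbhd (2 * H 4 + \<zeta>) (cm_interval \<mu> a c) \<union> nbhd (2 * H 4 + \<zeta>) (cm_interval \<mu> c b)"
proof (intro allI subsetI)
  fix a b c y
  assume "y \<in> nbhd \<zeta> (cm_interval \<mu> a b)"
  then obtain z where yz: "dist y (\<mu> a z b) \<le> \<zeta>"
    unfolding nbhd_def cm_interval_def by blast
  have card: "card {a, b, c, z} \<le> 4"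
    using card_length[of "[a, b, c, z]"] by simp
  obtain P :: "nat set" and m \<pi> lam where ma: "median_algebra P m" and rk: "rank_at_most P m 1"
    and in_P: "\<And>x. x \<in> {a, b, c, z} \<Longrightarrow> \<pi> x \<in> P"
    and hom: "\<And>x y z. x \<in> P \<Longrightarrow> y \<in> P \<Longrightarrow> z \<in> P \<Longrightarrow> dist (lam (m x y z)) (\<mu> (lam x) (lam y) (lam z)) \<le> H 4"
    and lam_\<pi>: "\<And>x. x \<in> {a, b, c, z} \<Longrightarrow> lam (\<pi> x) = x"
    by (rule rank_achievedE[OF assms(2) _ _ card]) auto
  have P: "\<pi> a \<in> P" "\<pi> b \<in> P" "\<pi> c \<in> P" "\<pi> z \<in> P"
    and id: "lam (\<pi> a) = a" "lam (\<pi> b) = b" "lam (\<pi> c) = c" "lam (\<pi> z) = z"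
    by (simp_all add: in_P lam_\<pi>)
  define w where "w = m (\<pi> a) (\<pi> z) (\<pi> b)"
  have wP: "w \<in> P" unfolding w_def by (rule median_algebra_closed[OF ma P(1,4,2)])
  have w_approx: "dist (lam w) (\<mu> a z b) \<le> H 4"
    using hom[OF P(1,4,2)] id unfolding w_def by simp
  have "m (\<pi> a) w (\<pi> b) = w"
    unfolding w_def by (rule median_algebra_median_in_interval[OF ma P(1,2,4)])
  then have "m (\<pi> a) w (\<pi> c) = w \<or> m (\<pi> c) w (\<pi> b) = w"
    by (rule rank_one_interval_split[OF ma rk P(1-3) wP])
  then have "dist (lam w) (\<mu> a (lam w) c) \<le> H 4 \<or> dist (lam w) (\<mu> c (lam w) b) \<le> H 4"
    using hom[OF P(1) wP P(3)] hom[OF P(3) wP P(2)] by (auto simp: id)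
  then show "y \<in> nbhd (2 * H 4 + \<zeta>) (cm_interval \<mu> a c) \<union> nbhd (2 * H 4 + \<zeta>) (cm_interval \<mu> c b)"
    using dist_two_step_le[OF yz w_approx] unfolding nbhd_def cm_interval_def by blast
qed

end
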